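(* Let $\lambda_1,\lambda_2\in\mathbb{C}\setminus\{0,-1,-2,\dots\}$, let $\alpha\in\mathbb{C}\setminus\{-1,-2,\dots\}$, and set $\beta=\lambda_1+\lambda_2-\alpha-2$. On $W=V_{\lambda_1}\otimes V_{\lambda_2}$ put $H^{(1)}=H\otimes\mathbb{I}$, $H^{(2)}=\mathbb{I}\otimes H$ and define $$\Delta(H)=H^{(1)}+H^{(2)},\qquad \Delta(E)=E\otimes\mathbb{I}+\mathbb{I}\otimes E,$$ $$\Delta(F)=(H^{(1)}-\lambda_1+2\alpha+2)(H^{(1)}+\lambda_1)^{-1}(F\otimes\mathbb{I})+(H^{(2)}-\lambda_2+2\beta+2)(H^{(2)}+\lambda_2)^{-1}(\mathbb{I}\otimes F)$$ (the diagonal operators $H^{(i)}+\lambda_i$ are invertible on $W$). Then (a) these operators satisfy the $sl_2$ relations $[\Delta(H),\Delta(E)]=2\Delta(E)$, $[\Delta(H),\Delta(F)]=-2\Delta(F)$, $[\Delta(E),\Delta(F)]=\Delta(H)$, i.e. they define a representation of $sl_2$ on $W$; and (b) for all integers $0\le k\le N$, the vectors $w_{k,N}=\sum_{n=0}^N R_n(k,N)\,|\lambda_1,n\rangle\otimes|\lambda_2,N-n\rangle$ satisfy $\Delta(H)w_{k,N}=(\lambda_1+\lambda_2+2N)w_{k,N}$, $\Delta(E)w_{k,N}=w_{k,N+1}$ and $\Delta(F)w_{k,N}=-(N-k)(N+k+\lambda_1+\lambda_2-1)\,w_{k,N-1}$ (with $w_{k,k-1}=0$); i.e. the $R_n(k,N)$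 are Clebsch–Gordan coefficients for this generalized coproduct of $sl_2$.
   Context: $sl_2$ is generated by $H,E,F$ with $[H,E]=2E$, $[H,F]=-2F$, $[E,F]=H$. For $\lambda\in\mathbb{C}$, $V_\lambda$ is the lowest-weight Verma module with basis $\{|\lambda,n\rangle:n\ge0\}$ and action $H|\lambda,n\rangle=(\lambda+2n)|\lambda,n\rangle$, $E|\lambda,n\rangle=|\lambda,n+1\rangle$, $F|\lambda,n\rangle=-n(n+\lambda-1)|\lambda,n-1\rangle$. The functions $R_n(k,N)$ (proportional to dual Hahn polynomials) are $$R_n(k,N)=\binom{N}{n}\,{}_3F_2\!\left(\begin{matrix}-k,\ k+\alpha+\beta+1,\ -n\\ \alpha+1,\ -N\end{matrix}\;\Big|\;1\right),$$ the terminating series $\sum_{j=0}^{\min(n,k)}\frac{(-k)_j(k+\alpha+\beta+1)_j(-n)_j}{j!(\alpha+1)_j(-N)_j}$ with $(a)_j=a(a+1)\cdots(a+j-1)$. Operator products mean composition. *)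

theory Defs
  imports Complex_Main
begin

text \<open>A vector of the Verma module V_lam is encoded by its coefficient function
  c :: nat => complex, meaning sum_n c n |lam,n>.  Vectors of W = V_l1 (x) V_l2 are
  coefficient functions v :: nat * nat => complex, meaning
  sum_(n,m) v (n,m) |l1,n> (x) |l2,m>  (elements of W have finite support).\<close>

type_synonym vvec = "nat \<Rightarrow> complex"
type_synonym wvec = "nat \<times> nat \<Rightarrow> complex"

text \<open>Verma module action: H|n> = (lam+2n)|n>, E|n> = |n+1>, F|n> = -n(n+lam-1)|n-1>.\<close>
definition vH :: "complex \<Rightarrow> vvec \<Rightarrow> vvec" where
  "vH lam c = (\<lambda>n. (lam + 2 * of_nat n) * c n)"
definition vE :: "vvec \<Rightarrow> vvec" where
  "vE c = (\<lambda>n. if n = 0 then 0 else c (n - 1))"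
definition vF :: "complex \<Rightarrow> vvec \<Rightarrow> vvec" where
  "vF lam c = (\<lambda>n. - (of_nat (Suc n) * (of_nat (Suc n) + lam - 1)) * c (Suc n))"

text \<open>The inverse of the diagonal operator H + lam on V_lam (eigenvalue 2 lam + 2n).\<close>
definition vHplus_inv :: "complex \<Rightarrow> vvec \<Rightarrow> vvec" where
  "vHplus_inv lam c = (\<lambda>n. c n / (lam + 2 * of_nat n + lam))"

definition tens1 :: "(vvec \<Rightarrow> vvec) \<Rightarrow> wvec \<Rightarrow> wvec" where
  "tens1 A v = (\<lambda>(n, m). A (\<lambda>n'. v (n', m)) n)"
definition tens2 :: "(vvec \<Rightarrow> vvec) \<Rightarrow> wvec \<Rightarrow> wvec" where
  "tens2 B v = (\<lambda>(n, m). B (\<lambda>m'. v (n, m')) m)"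

definition comm :: "(wvec \<Rightarrow> wvec) \<Rightarrow> (wvec \<Rightarrow> wvec) \<Rightarrow> wvec \<Rightarrow> wvec" where
  "comm A B v = (\<lambda>p. A (B v) p - B (A v) p)"

definition DeltaH :: "complex \<Rightarrow> complex \<Rightarrow> wvec \<Rightarrow> wvec" where
  "DeltaH l1 l2 v = (\<lambda>p. tens1 (vH l1) v p + tens2 (vH l2) v p)"

definition DeltaE :: "wvec \<Rightarrow> wvec" where
  "DeltaE v = (\<lambda>p. tens1 vE v p + tens2 vE v p)"

definition DeltaF :: "complex \<Rightarrow> complex \<Rightarrow> complex \<Rightarrow> wvec \<Rightarrow> wvec" where
  "DeltaF l1 l2 a v =
     (let b = l1 + l2 - a - 2;
          u1 = tens1 (vHplus_inv l1) (tens1 (vF l1) v);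
          u2 = tens2 (vHplus_inv l2) (tens2 (vF l2) v)
      in (\<lambda>p. (tens1 (vH l1) u1 p - (l1 - 2 * a - 2) * u1 p)
                + (tens2 (vH l2) u2 p - (l2 - 2 * b - 2) * u2 p)))"

text \<open>R_n(k,N) = binom N n * 3F2(-k, k+a+b+1, -n; a+1, -N; 1), terminating series.\<close>
definition Rcoef :: "complex \<Rightarrow> complex \<Rightarrow> nat \<Rightarrow> nat \<Rightarrow> nat \<Rightarrow> complex" where
  "Rcoef a b n k N = of_nat (N choose n) *
     (\<Sum>j = 0..min n k. pochhammer (- of_nat k) j * pochhammer (of_nat k + a + b + 1) j
        * pochhammer (- of_nat n) j
        / (fact j * pochhammer (a + 1) j * pochhammer (- of_nat N) j))"

definition wkN :: "complex \<Rightarrow> complex \<Rightarrow> nat \<Rightarrow> nat \<Rightarrow> wvec" where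
  "wkN a b k N = (\<lambda>(n, m). if n + m = N then Rcoef a b n k N else 0)"

end

theory Submission
  imports Defs "HOL-Computational_Algebra.Formal_Power_Series"
begin

text \<open>Coefficient-wise, \<open>\<Delta>(F)\<close> collapses to the two-term operator
  \<open>v(n,m) \<mapsto> -(n+1)(n+\<alpha>+1) v(n+1,m) - (m+1)(m+\<beta>+1) v(n,m+1)\<close>, from which the
  \<open>sl\<^sub>2\<close> relations are a direct computation.  On the vectors \<open>w\<^sub>k\<^sub>,\<^sub>N\<close>, \<open>\<Delta>(H)\<close> is immediate and
  \<open>\<Delta>(E)\<close> amounts to the Pascal rule \<open>R\<^sub>n(k,N+1) = R\<^sub>n\<^sub>-\<^sub>1(k,N) + R\<^sub>n(k,N)\<close>, which holds because
  cancelling \<open>(-N)\<^sub>j\<close> writes \<open>R\<^sub>n(k,N) = \<Sum>\<^sub>j T\<^sub>j binom(N-j, n-j)\<close> with \<open>T\<^sub>j\<close> independent of \<open>N\<close>.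
  For \<open>\<Delta>(F)\<close>, the relation \<open>[\<Delta>(E),\<Delta>(F)] = \<Delta>(H)\<close> and induction on \<open>N\<close> reduce everything to
  \<open>\<Delta>(F) w\<^sub>k\<^sub>,\<^sub>k = 0\<close>; there Chu-Vandermonde gives \<open>R\<^sub>n(k,k) = binom(k,n) (-k-\<beta>)\<^sub>n / (\<alpha>+1)\<^sub>n\<close>,
  and the two terms of \<open>\<Delta>(F)\<close> cancel.\<close>

lemma DeltaH_apply:
  "DeltaH l1 l2 v (n, m) = (l1 + l2 + 2 * of_nat n + 2 * of_nat m) * v (n, m)"
  by (simp add: DeltaH_def tens1_def tens2_def vH_def algebra_simps)

lemma DeltaE_apply:
  "DeltaE v (n, m) = (if n = 0 then 0 else v (n - 1, m)) + (if m = 0 then 0 else v (n, m - 1))"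
  by (simp add: DeltaE_def tens1_def tens2_def vE_def)

lemma twisted_vF_apply:
  fixes lam c :: complex
  assumes "lam + of_nat n \<noteq> 0"
  shows "vH lam (vHplus_inv lam (vF lam u)) n - (lam - 2 * c - 2) * vHplus_inv lam (vF lam u) n
    = - (of_nat (Suc n) * (of_nat n + c + 1)) * u (Suc n)"
proof -
  have "vHplus_inv lam (vF lam u) n
      = - of_nat (Suc n) * u (Suc n) * (lam + of_nat n) / (2 * (lam + of_nat n))"
    by (simp add: vHplus_inv_def vF_def algebra_simps)
  also have "\<dots> = - of_nat (Suc n) * u (Suc n) / 2"
    using assms by (rule nonzero_mult_divide_mult_cancel_right)
  finally have inv: "vHplus_inv lam (vF lam u) n = - of_nat (Suc n) * u (Suc n) / 2" .
  show ?thesis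
    unfolding vH_def inv by (simp add: field_simps)
qed

lemma DeltaF_apply:
  assumes l1: "\<forall>n::nat. l1 \<noteq> - of_nat n" and l2: "\<forall>n::nat. l2 \<noteq> - of_nat n"
  shows "DeltaF l1 l2 a v (n, m) =
    - (of_nat (Suc n) * (of_nat n + a + 1)) * v (Suc n, m)
    - (of_nat (Suc m) * (of_nat m + (l1 + l2 - a - 2) + 1)) * v (n, Suc m)"
proof -
  have "l1 + of_nat n \<noteq> 0" "l2 + of_nat m \<noteq> 0"
    using l1 l2 by (metis add.commute add_eq_0_iff)+
  then show ?thesis
    unfolding DeltaF_def Let_def tens1_def tens2_def
    using twisted_vF_apply[of l1 n "\<lambda>n'. v (n', m)" a]
      twisted_vF_apply[of l2 m "\<lambda>m'. v (n, m')" "l1 + l2 - a - 2"]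
    by simp
qed

lemma comm_DeltaH_DeltaE: "comm (DeltaH l1 l2) DeltaE v = (\<lambda>p. 2 * DeltaE v p)"
proof (rule ext)
  fix p :: "nat \<times> nat"
  obtain n m where p: "p = (n, m)" by (cases p)
  show "comm (DeltaH l1 l2) DeltaE v p = 2 * DeltaE v p"
    unfolding p comm_def DeltaH_apply DeltaE_apply
    by (cases n; cases m) (simp_all add: DeltaH_apply algebra_simps)
qed

lemma comm_DeltaH_DeltaF:
  assumes l1: "\<forall>n::nat. l1 \<noteq> - of_nat n" and l2: "\<forall>n::nat. l2 \<noteq> - of_nat n"
  shows "comm (DeltaH l1 l2) (DeltaF l1 l2 a) v = (\<lambda>p. - 2 * DeltaF l1 l2 a v p)"
proof (rule ext)
  fix p :: "nat \<times> nat"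
  obtain n m where p: "p = (n, m)" by (cases p)
  show "comm (DeltaH l1 l2) (DeltaF l1 l2 a) v p = - 2 * DeltaF l1 l2 a v p"
    unfolding p comm_def DeltaH_apply DeltaF_apply[OF l1 l2]
    by (simp add: DeltaH_apply algebra_simps)
qed

lemma comm_DeltaE_DeltaF:
  assumes l1: "\<forall>n::nat. l1 \<noteq> - of_nat n" and l2: "\<forall>n::nat. l2 \<noteq> - of_nat n"
  shows "comm DeltaE (DeltaF l1 l2 a) v = DeltaH l1 l2 v"
proof (rule ext)
  fix p :: "nat \<times> nat"
  obtain n m where p: "p = (n, m)" by (cases p)
  show "comm DeltaE (DeltaF l1 l2 a) v p = DeltaH l1 l2 v p"
    unfolding p comm_def DeltaH_apply DeltaE_apply
    by (cases n; cases m) (simp_all add: DeltaF_apply[OF l1 l2] DeltaE_apply algebra_simps)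
qed

lemma DeltaE_scale: "DeltaE (\<lambda>p. c * v p) = (\<lambda>p. c * DeltaE v p)"
  by (simp add: fun_eq_iff split_paired_All DeltaE_apply algebra_simps)

lemma of_nat_choose_mult_pochhammer:
  assumes "j \<le> n" "j \<le> N"
  shows "(of_nat (N choose n) :: 'a::field_char_0) * pochhammer (- of_nat n) j
    = pochhammer (- of_nat N) j * of_nat ((N - j) choose (n - j))"
proof (cases "n \<le> N")
  case True
  have "(of_nat ((N choose n) * (n choose j)) :: 'a) = of_nat ((N choose j) * ((N - j) choose (n - j)))"
    by (simp only: choose_mult[OF assms(1) True])
  then show ?thesis
    using gbinomial_pochhammer[of "of_nat n :: 'a" j] gbinomial_pochhammer[of "of_nat N :: 'a" j]
    by (simp add: binomial_gbinomial field_simps)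
next
  case False
  with assms have "N - j < n - j"
    by linarith
  with False show ?thesis
    by (simp add: not_le binomial_eq_0)
qed

definition hahn_term :: "complex \<Rightarrow> complex \<Rightarrow> nat \<Rightarrow> nat \<Rightarrow> complex" where
  "hahn_term a b k j =
     pochhammer (- of_nat k) j * pochhammer (of_nat k + a + b + 1) j / (fact j * pochhammer (a + 1) j)"

lemma hahn_term_eq_0: "k < j \<Longrightarrow> hahn_term a b k j = 0"
  by (simp add: hahn_term_def pochhammer_of_nat_eq_0_lemma)

lemma Rcoef_eq_sum_binomial:
  assumes "k \<le> N"
  shows "Rcoef a b n k N = (\<Sum>j\<le>n. hahn_term a b k j * of_nat ((N - j) choose (n - j)))"
proof -
  have "Rcoef a b n k N = (\<Sum>j = 0..min n k. hahn_term a b k j * of_nat ((N - j) choose (n - j)))"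
    unfolding Rcoef_def sum_distrib_left
  proof (rule sum.cong[OF refl])
    fix j assume "j \<in> {0..min n k}"
    then have j: "j \<le> n" "j \<le> N"
      using assms by auto
    then have "pochhammer (- of_nat N :: complex) j \<noteq> 0"
      by (simp add: pochhammer_of_nat_eq_0_iff)
    have "of_nat (N choose n) * (pochhammer (- of_nat k) j * pochhammer (of_nat k + a + b + 1) j
         * pochhammer (- of_nat n) j / (fact j * pochhammer (a + 1) j * pochhammer (- of_nat N) j))
       = hahn_term a b k j
         * (of_nat (N choose n) * pochhammer (- of_nat n) j / pochhammer (- of_nat N) j)"
      unfolding hahn_term_def by (simp add: field_simps)
    also have "\<dots> = hahn_term a b k j * of_nat ((N - j) choose (n - j))"
      using \<open>pochhammer (- of_nat N) j \<noteq> 0\<close> by (simp add: of_nat_choose_mult_pochhammer[OF j])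
    finally show
      "of_nat (N choose n) * (pochhammer (- of_nat k) j * pochhammer (of_nat k + a + b + 1) j
         * pochhammer (- of_nat n) j / (fact j * pochhammer (a + 1) j * pochhammer (- of_nat N) j))
       = hahn_term a b k j * of_nat ((N - j) choose (n - j))" .
  qed
  also have "\<dots> = (\<Sum>j\<le>n. hahn_term a b k j * of_nat ((N - j) choose (n - j)))"
    by (rule sum.mono_neutral_left) (auto simp: hahn_term_eq_0)
  finally show ?thesis .
qed

lemma Rcoef_0: "Rcoef a b 0 k N = 1"
  by (simp add: Rcoef_def)

lemma Rcoef_eq_0: "N < n \<Longrightarrow> Rcoef a b n k N = 0"
  by (simp add: Rcoef_def)

lemma Rcoef_Suc_Suc:
  assumes "k \<le> N"
  shows "Rcoef a b (Suc n) k (Suc N) = Rcoef a b n k N + Rcoef a b (Suc n) k N"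
proof -
  let ?T = "hahn_term a b k"
  have pascal: "?T j * of_nat ((Suc N - j) choose (Suc n - j))
      = ?T j * of_nat ((N - j) choose (n - j)) + ?T j * of_nat ((N - j) choose (Suc n - j))"
    if "j \<le> n" for j
  proof (cases "j \<le> k")
    case True
    with assms that have "Suc N - j = Suc (N - j)" "Suc n - j = Suc (n - j)"
      by auto
    then show ?thesis
      by (simp add: algebra_simps)
  qed (simp add: hahn_term_eq_0)
  have "Rcoef a b (Suc n) k (Suc N)
      = (\<Sum>j\<le>n. ?T j * of_nat ((Suc N - j) choose (Suc n - j))) + ?T (Suc n)"
    using assms by (simp add: Rcoef_eq_sum_binomial)
  also have "\<dots> = Rcoef a b n k N
      + ((\<Sum>j\<le>n. ?T j * of_nat ((N - j) choose (Suc n - j))) + ?T (Suc n))"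
    using assms by (simp add: pascal sum.distrib Rcoef_eq_sum_binomial)
  also have "\<dots> = Rcoef a b n k N + Rcoef a b (Suc n) k N"
    using assms by (simp add: Rcoef_eq_sum_binomial)
  finally show ?thesis .
qed

lemma DeltaH_wkN: "DeltaH l1 l2 (wkN a b k N) = (\<lambda>p. (l1 + l2 + 2 * of_nat N) * wkN a b k N p)"
  by (auto simp: fun_eq_iff DeltaH_apply wkN_def)

lemma DeltaE_wkN:
  assumes "k \<le> N"
  shows "DeltaE (wkN a b k N) = wkN a b k (Suc N)"
proof (rule ext)
  fix p :: "nat \<times> nat"
  obtain n m where p: "p = (n, m)" by (cases p)
  show "DeltaE (wkN a b k N) p = wkN a b k (Suc N) p"
    unfolding p DeltaE_apply wkN_def
    by (cases n; cases m) (auto simp: Rcoef_0 Rcoef_eq_0 Rcoef_Suc_Suc[OF assms])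
qed

lemma pochhammer_plus_one_neq_0:
  assumes "\<forall>n::nat. a \<noteq> - of_nat (Suc n)"
  shows "pochhammer (a + 1 :: complex) n \<noteq> 0"
proof
  assume "pochhammer (a + 1) n = 0"
  then obtain i where i: "a + 1 = - of_nat i"
    by (auto simp: pochhammer_eq_0_iff)
  have "a = (a + 1) - 1"
    by simp
  also have "\<dots> = - of_nat (Suc i)"
    unfolding i by simp
  finally show False
    using assms by blast
qed

lemma Rcoef_diag:
  assumes a: "\<forall>n::nat. a \<noteq> - of_nat (Suc n)" and "n \<le> k"
  shows "Rcoef a b n k k * pochhammer (a + 1) n = of_nat (k choose n) * pochhammer (- (of_nat k + b)) n"
proof -
  have "Rcoef a b n k k = of_nat (k choose n) *
      (\<Sum>j = 0..n. pochhammer (of_nat k + a + b + 1) j * pochhammer (- of_nat n) j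
        / (of_nat (fact j) * pochhammer (a + 1) j))"
    unfolding Rcoef_def using \<open>n \<le> k\<close>
    by (intro arg_cong[where f = "\<lambda>x. of_nat (k choose n) * x"] sum.cong)
      (auto simp: pochhammer_of_nat_eq_0_iff)
  also have "\<dots> = of_nat (k choose n) * (pochhammer (- (of_nat k + b)) n / pochhammer (a + 1) n)"
  proof -
    have "\<forall>i \<in> {0..<n}. a + 1 \<noteq> - of_nat i"
      using pochhammer_plus_one_neq_0[OF a, of n] by (auto simp: pochhammer_eq_0_iff)
    from Vandermonde_pochhammer[OF this, of "of_nat k + a + b + 1"] show ?thesis
      by (simp add: algebra_simps)
  qed
  finally show ?thesis
    using pochhammer_plus_one_neq_0[OF a, of n] by simp
qed

lemma Rcoef_diag_Suc:
  assumes a: "\<forall>n::nat. a \<noteq> - of_nat (Suc n)" and "Suc n \<le> k"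
  shows "of_nat (Suc n) * (of_nat n + a + 1) * Rcoef a b (Suc n) k k
    = - (of_nat (k - n) * (of_nat (k - n) + b) * Rcoef a b n k k)"
proof -
  let ?P = "pochhammer (- (of_nat k + b))" and ?Q = "pochhammer (a + 1)"
  have absorb: "of_nat (Suc n) * of_nat (k choose Suc n)
      = (of_nat (k - n) * of_nat (k choose n) :: complex)"
    unfolding of_nat_mult[symmetric] binomial_absorption binomial_absorb_comp ..
  have P_Suc: "?P (Suc n) = - (?P n * (of_nat (k - n) + b))"
    using \<open>Suc n \<le> k\<close> by (simp add: pochhammer_Suc of_nat_diff algebra_simps)
  have "of_nat (Suc n) * (of_nat n + a + 1) * Rcoef a b (Suc n) k k * ?Q n
      = of_nat (Suc n) * (Rcoef a b (Suc n) k k * ?Q (Suc n))"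
    by (simp add: pochhammer_Suc algebra_simps)
  also have "\<dots> = of_nat (Suc n) * of_nat (k choose Suc n) * ?P (Suc n)"
    using Rcoef_diag[OF a \<open>Suc n \<le> k\<close>] by simp
  also have "\<dots> = - (of_nat (k - n) * (of_nat (k - n) + b) * (of_nat (k choose n) * ?P n))"
    unfolding absorb P_Suc by (simp add: algebra_simps)
  also have "\<dots> = - (of_nat (k - n) * (of_nat (k - n) + b) * Rcoef a b n k k) * ?Q n"
    using Rcoef_diag[OF a, of n k b] \<open>Suc n \<le> k\<close> by simp
  finally show ?thesis
    using pochhammer_plus_one_neq_0[OF a, of n] by (metis mult_right_cancel)
qed

lemma DeltaF_wkN_diag:
  assumes l1: "\<forall>n::nat. l1 \<noteq> - of_nat n" and l2: "\<forall>n::nat. l2 \<noteq> - of_nat n"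
    and a: "\<forall>n::nat. a \<noteq> - of_nat (Suc n)"
  shows "DeltaF l1 l2 a (wkN a (l1 + l2 - a - 2) k k) = (\<lambda>p. 0)"
proof (rule ext)
  fix p :: "nat \<times> nat"
  obtain n m where p: "p = (n, m)" by (cases p)
  define b where "b = l1 + l2 - a - 2"
  have F: "DeltaF l1 l2 a v (n, m) =
      - (of_nat (Suc n) * (of_nat n + a + 1)) * v (Suc n, m)
      - (of_nat (Suc m) * (of_nat m + b + 1)) * v (n, Suc m)"
    for v
    unfolding b_def by (rule DeltaF_apply[OF l1 l2])
  have "DeltaF l1 l2 a (wkN a b k k) (n, m) = 0"
  proof (cases "Suc n + m = k")
    case True
    then have "Suc n \<le> k" "k - n = Suc m"
      by auto
    with True have "DeltaF l1 l2 a (wkN a b k k) (n, m)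
        = - (of_nat (Suc n) * (of_nat n + a + 1) * Rcoef a b (Suc n) k k)
          - of_nat (k - n) * (of_nat (k - n) + b) * Rcoef a b n k k"
      unfolding F by (simp add: wkN_def algebra_simps)
    also have "\<dots> = 0"
      unfolding Rcoef_diag_Suc[OF a \<open>Suc n \<le> k\<close>] by simp
    finally show ?thesis .
  qed (simp add: F wkN_def)
  then show "DeltaF l1 l2 a (wkN a (l1 + l2 - a - 2) k k) p = 0"
    unfolding p b_def .
qed

lemma DeltaF_wkN:
  assumes l1: "\<forall>n::nat. l1 \<noteq> - of_nat n" and l2: "\<forall>n::nat. l2 \<noteq> - of_nat n"
    and a: "\<forall>n::nat. a \<noteq> - of_nat (Suc n)" and "k \<le> N"
  shows "DeltaF l1 l2 a (wkN a (l1 + l2 - a - 2) k N) =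
    (\<lambda>p. - (of_nat (N - k) * (of_nat N + of_nat k + l1 + l2 - 1))
      * wkN a (l1 + l2 - a - 2) k (N - 1) p)"
  using \<open>k \<le> N\<close>
proof (induction N rule: nat_induct_at_least)
  case base
  show ?case
    using DeltaF_wkN_diag[OF l1 l2 a] by simp
next
  case (Suc N)
  define b where "b = l1 + l2 - a - 2"
  define w where "w = wkN a b k N"
  define c where "c = - (of_nat (N - k) * (of_nat N + of_nat k + l1 + l2 - 1))"
  have F: "DeltaF l1 l2 a w = (\<lambda>p. c * wkN a b k (N - 1) p)"
    using Suc.IH unfolding w_def b_def c_def .
  have EF: "DeltaE (DeltaF l1 l2 a w) = (\<lambda>p. c * w p)"
  proof (cases "N = k")
    case True
    then show ?thesis
      unfolding F DeltaE_scale c_def by simp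
  next
    case False
    with Suc.hyps have "DeltaE (wkN a b k (N - 1)) = w"
      unfolding w_def using DeltaE_wkN[of k "N - 1"] by simp
    then show ?thesis
      unfolding F DeltaE_scale by simp
  qed
  have "DeltaF l1 l2 a (wkN a b k (Suc N)) = DeltaF l1 l2 a (DeltaE w)"
    unfolding w_def DeltaE_wkN[OF Suc.hyps] ..
  also have "\<dots> = (\<lambda>p. DeltaE (DeltaF l1 l2 a w) p - DeltaH l1 l2 w p)"
    using comm_DeltaE_DeltaF[OF l1 l2, of a w]
    unfolding comm_def by (simp add: fun_eq_iff algebra_simps)
  also have "\<dots> = (\<lambda>p. (c - (l1 + l2 + 2 * of_nat N)) * w p)"
    unfolding EF by (simp add: w_def DeltaH_wkN algebra_simps)
  also have "\<dots> = (\<lambda>p. - (of_nat (Suc N - k) * (of_nat (Suc N) + of_nat k + l1 + l2 - 1))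
      * wkN a b k (Suc N - 1) p)"
    unfolding c_def w_def using Suc.hyps by (simp add: of_nat_diff Suc_diff_le algebra_simps)
  finally show ?case
    unfolding b_def .
qed

theorem mainTheorem3:
  fixes l1 l2 a :: complex
  assumes l1: "\<forall>n::nat. l1 \<noteq> - of_nat n"
    and l2: "\<forall>n::nat. l2 \<noteq> - of_nat n"
    and a: "\<forall>n::nat. a \<noteq> - of_nat (Suc n)"
  shows "(\<forall>v::wvec. finite {p. v p \<noteq> 0} \<longrightarrow>
            comm (DeltaH l1 l2) DeltaE v = (\<lambda>p. 2 * DeltaE v p)
          \<and> comm (DeltaH l1 l2) (DeltaF l1 l2 a) v = (\<lambda>p. - 2 * DeltaF l1 l2 a v p)
          \<and> comm DeltaE (DeltaF l1 l2 a) v = DeltaH l1 l2 v)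
       \<and> (\<forall>k N :: nat. k \<le> N \<longrightarrow>
            (let b = l1 + l2 - a - 2 in
              DeltaH l1 l2 (wkN a b k N) = (\<lambda>p. (l1 + l2 + 2 * of_nat N) * wkN a b k N p)
            \<and> DeltaE (wkN a b k N) = wkN a b k (Suc N)
            \<and> DeltaF l1 l2 a (wkN a b k N) =
                (if N = k then (\<lambda>p. 0)
                 else (\<lambda>p. - (of_nat (N - k) * (of_nat N + of_nat k + l1 + l2 - 1))
                              * wkN a b k (N - 1) p))))"
  using comm_DeltaH_DeltaE comm_DeltaH_DeltaF[OF l1 l2] comm_DeltaE_DeltaF[OF l1 l2]
    DeltaH_wkN DeltaE_wkN DeltaF_wkN[OF l1 l2 a]
  by (simp add: Let_def)

end
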